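(* Let $1/2<\delta<1$. Consider a finite point set $P\subset\mathbb{R}^1$ containing the source $s$ and a point $q\notin P$. Let $\rho_{\mathrm{old}}(p)$ be the range of a point $p$ in the source-based assignment $\rho_{\mathrm{sb}}(P)$ and $\rho_{\mathrm{new}}(p)$ its range in $\rho_{\mathrm{sb}}(P\cup\{q\})$ (ranges of points not in the set being $0$). Then $$\big|\{p\in P\cup\{q\}:\rho_{\mathrm{old}}(p)<\rho_{\mathrm{new}}(p)\}\big|\le 2\quad\text{and}\quad\big|\{p\in P\cup\{q\}:\rho_{\mathrm{old}}(p)>\rho_{\mathrm{new}}(p)\}\big|\le 1.$$
   Context: Points of $P\subset\mathbb{R}^1$ other than $s$ left of $s$ are $\ell_1,\ell_2,\dots$ and right of $s$ are $r_1,r_2,\dots$, numbered by increasing distance from $s$. The successor $\mathrm{suc}(p)$ of $r_i$ is $r_{i+1}$ and of $\ell_i$ is $\ell_{i+1}$, $s$ has the (at most) two successors $r_1,\ell_1$, and the farthest points on each side (extreme points) have no successor ($\mathrm{suc}=\mathrm{nil}$). The standard range $\rho_{\mathrm{st}}(p)$ of $p\ne s$ is $|p\,\mathrm{suc}(p)|$, or $0$ if $p$ is extreme. A point $p\ne s$ is expensive if $\mathrm{suc}(p)\ne\mathrm{nil}$ and $|p\,\mathrm{suc}(p)|>\delta\cdot|s\,\mathrm{suc}(p)|$, and cheap otherwise; $s$ is always expensive. Let $P_{\mathrm{exp}},P_{\mathrm{cheap}}$ be the sets of expensive and cheap points, and $d_{\max}=\max\{|s\,\mathrm{suc}(p)|:p\in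 P_{\mathrm{exp}}\}$ (for $p=s$ both successors are considered). The source-based range assignment is $\rho_{\mathrm{sb}}(s)=d_{\max}$, $\rho_{\mathrm{sb}}(p)=0$ for $p\in P_{\mathrm{exp}}\setminus\{s\}$, and $\rho_{\mathrm{sb}}(p)=\rho_{\mathrm{st}}(p)$ for $p\in P_{\mathrm{cheap}}$. *)

theory Defs
  imports Main Complex_Main
begin

text \<open>For p > s this is r_{i+1} after r_i,
for p < s it is l_{i+1} after l_i, and for p = s it yields both r_1 and l_1.\<close>

definition succs :: "real set \<Rightarrow> real \<Rightarrow> real \<Rightarrow> real set" where
  "succs P s p = {x \<in> P.
      (s \<le> p \<and> p < x \<and> (\<forall>y\<in>P. \<not> (p < y \<and> y < x))) \<or>
      (p \<le> s \<and> x < p \<and> (\<forall>y\<in>P. \<not> (x < y \<and> y < p)))}"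

definition rho_st :: "real set \<Rightarrow> real \<Rightarrow> real \<Rightarrow> real" where
  "rho_st P s p = (if succs P s p = {} then 0 else \<bar>p - (THE x. x \<in> succs P s p)\<bar>)"

definition expensive :: "real set \<Rightarrow> real \<Rightarrow> real \<Rightarrow> real \<Rightarrow> bool" where
  "expensive P s \<delta> p \<longleftrightarrow> p \<in> P \<and>
     (p = s \<or> (\<exists>x \<in> succs P s p. \<bar>p - x\<bar> > \<delta> * \<bar>s - x\<bar>))"

text \<open>d_max; the inserted 0 only matters when s has no successor (P = {s}).\<close>
definition d_max :: "real set \<Rightarrow> real \<Rightarrow> real \<Rightarrow> real" where
  "d_max P s \<delta> = Max (insert 0 {\<bar>s - x\<bar> | p x. expensive P s \<delta> p \<and> x \<in> succs P s p})"

definition rho_sb :: "real set \<Rightarrow> real \<Rightarrow> real \<Rightarrow> real \<Rightarrow> real" where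
  "rho_sb P s \<delta> p =
     (if p \<notin> P then 0
      else if p = s then d_max P s \<delta>
      else if expensive P s \<delta> p then 0
      else rho_st P s p)"

end

theory Submission
  imports Defs
begin

(* Inserting q changes the successors of at most one point a of P, the neighbour of q on the
   side of the source; every other point keeps its successors, hence its expensiveness and its
   range. So only a, s and q can change range, and q, whose old range is 0, cannot lose range.
   The range of s is d_max, a maximum over the expensive points. If both a and q gain range,
   neither is expensive after the insertion, so every expensive point of P \<union> {q} is an
   expensive point of P with the same successor and d_max cannot grow. If a loses range, it was
   cheap in P, so every expensive point of P stays expensive and d_max cannot shrink. *)

lemma succs_insert_eq:
  assumes "q \<notin> succs (insert q P) s p"
  shows "succs (insert q P) s p = succs P s p"
  using assms unfolding succs_def by (auto; fastforce)

lemma succs_pred_unique: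
  assumes "x \<in> succs P s p" "x \<in> succs P s p'" "p \<in> P" "p' \<in> P"
  shows "p = p'"
  using assms unfolding succs_def by (auto; smt)

lemma obtain_succs_insert_eq_except:
  obtains a where "\<And>p. p \<in> P \<Longrightarrow> p \<noteq> a \<Longrightarrow> succs (insert q P) s p = succs P s p"
proof (cases "\<exists>a\<in>P. q \<in> succs (insert q P) s a")
  case True
  then obtain a where "a \<in> P" "q \<in> succs (insert q P) s a" by blast
  then have "succs (insert q P) s p = succs P s p" if "p \<in> P" "p \<noteq> a" for p
    using succs_pred_unique[of q "insert q P" s a p] that succs_insert_eq by blast
  then show ?thesis by (rule that)
next
  case False
  then show ?thesis using that succs_insert_eq by blast
qed

lemma expensive_cong:
  assumes "p \<in> P" "p \<in> P'" "succs P' s p = succs P s p"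
  shows "expensive P' s \<delta> p = expensive P s \<delta> p"
  using assms unfolding expensive_def by auto

lemma rho_sb_cong:
  assumes "p \<in> P" "p \<in> P'" "p \<noteq> s" "succs P' s p = succs P s p"
  shows "rho_sb P' s \<delta> p = rho_sb P s \<delta> p"
  using assms expensive_cong[OF assms(1,2,4)] unfolding rho_sb_def rho_st_def by simp

lemma finite_succ_dists:
  assumes "finite P"
  shows "finite {\<bar>s - x\<bar> | p x. expensive P s \<delta> p \<and> x \<in> succs P s p}"
proof (rule finite_subset)
  show "{\<bar>s - x\<bar> | p x. expensive P s \<delta> p \<and> x \<in> succs P s p} \<subseteq> (\<lambda>x. \<bar>s - x\<bar>) ` P"
    unfolding succs_def by auto
qed (use assms in simp)

lemma d_max_nonneg: "finite P \<Longrightarrow> 0 \<le> d_max P s \<delta>"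
  unfolding d_max_def by (simp add: finite_succ_dists)

lemma d_max_mono:
  assumes "finite P'" and "\<And>p. expensive P s \<delta> p \<Longrightarrow> p \<in> P' \<and> succs P' s p = succs P s p"
  shows "d_max P s \<delta> \<le> d_max P' s \<delta>"
  unfolding d_max_def
proof (rule Max_mono)
  have "expensive P' s \<delta> p \<and> succs P' s p = succs P s p" if "expensive P s \<delta> p" for p
    using that assms(2)[OF that] expensive_cong[of p P P'] unfolding expensive_def by blast
  then show "insert 0 {\<bar>s - x\<bar> | p x. expensive P s \<delta> p \<and> x \<in> succs P s p}
      \<subseteq> insert 0 {\<bar>s - x\<bar> | p x. expensive P' s \<delta> p \<and> x \<in> succs P' s p}"
    by blast
qed (simp_all add: assms(1) finite_succ_dists)

lemma rho_sb_nonneg: "finite P \<Longrightarrow> 0 \<le> rho_sb P s \<delta> p"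
  unfolding rho_sb_def rho_st_def using d_max_nonneg by auto

lemma rho_sb_expensive_eq_0: "expensive P s \<delta> p \<Longrightarrow> p \<noteq> s \<Longrightarrow> rho_sb P s \<delta> p = 0"
  unfolding rho_sb_def by simp

context
  fixes P :: "real set" and s q a \<delta> :: real
  assumes finite: "finite P" and source: "s \<in> P" and new: "q \<notin> P"
    and succs_kept: "\<And>p. p \<in> P \<Longrightarrow> p \<noteq> a \<Longrightarrow> succs (insert q P) s p = succs P s p"
begin

lemma rho_sb_insert_eq_except:
  assumes "p \<notin> {a, s, q}"
  shows "rho_sb (insert q P) s \<delta> p = rho_sb P s \<delta> p"
proof (cases "p \<in> P")
  case True
  with assms show ?thesis by (intro rho_sb_cong succs_kept) auto
next
  case False
  with assms show ?thesis by (simp add: rho_sb_def)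
qed

lemma rho_sb_insert_new_ge: "rho_sb P s \<delta> q \<le> rho_sb (insert q P) s \<delta> q"
proof -
  have "rho_sb P s \<delta> q = 0" using new by (simp add: rho_sb_def)
  with finite show ?thesis by (simp add: rho_sb_nonneg)
qed

lemma rho_sb_insert_source_le:
  assumes "a \<noteq> s" "rho_sb P s \<delta> a < rho_sb (insert q P) s \<delta> a"
    and "rho_sb P s \<delta> q < rho_sb (insert q P) s \<delta> q"
  shows "rho_sb (insert q P) s \<delta> s \<le> rho_sb P s \<delta> s"
proof -
  have "\<not> expensive (insert q P) s \<delta> a"
  proof
    assume "expensive (insert q P) s \<delta> a"
    then have "rho_sb (insert q P) s \<delta> a = 0" using assms(1) by (rule rho_sb_expensive_eq_0)
    with assms(2) rho_sb_nonneg[OF finite, of s \<delta> a] show False by linarith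
  qed
  moreover have "\<not> expensive (insert q P) s \<delta> q"
    using assms(3) rho_sb_expensive_eq_0 source new by (fastforce simp: rho_sb_def)
  ultimately have "d_max (insert q P) s \<delta> \<le> d_max P s \<delta>"
    using finite succs_kept by (intro d_max_mono) (auto simp: expensive_def)
  then show ?thesis using source by (simp add: rho_sb_def)
qed

lemma rho_sb_insert_source_ge:
  assumes "a \<noteq> s" "rho_sb (insert q P) s \<delta> a < rho_sb P s \<delta> a"
  shows "rho_sb P s \<delta> s \<le> rho_sb (insert q P) s \<delta> s"
proof -
  have "\<not> expensive P s \<delta> a"
  proof
    assume "expensive P s \<delta> a"
    then have "rho_sb P s \<delta> a = 0" using assms(1) by (rule rho_sb_expensive_eq_0)
    with assms(2) rho_sb_nonneg[of "insert q P" s \<delta> a] finite show False by simp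
  qed
  then have "d_max P s \<delta> \<le> d_max (insert q P) s \<delta>"
    using finite succs_kept by (intro d_max_mono) (auto simp: expensive_def)
  then show ?thesis using source by (simp add: rho_sb_def)
qed

lemma card_rho_sb_insert_increased:
  "card {p \<in> insert q P. rho_sb P s \<delta> p < rho_sb (insert q P) s \<delta> p} \<le> 2"
    (is "card ?I \<le> 2")
proof (cases "a = s")
  case True
  then have "?I \<subseteq> {s, q}" using rho_sb_insert_eq_except by fastforce
  then have "card ?I \<le> card {s, q}" by (intro card_mono) auto
  also have "\<dots> \<le> 2" by (cases "s = q") simp_all
  finally show ?thesis .
next
  case False
  then have "?I \<subset> {a, s, q}"
    using rho_sb_insert_eq_except rho_sb_insert_source_le by fastforce
  then have "card ?I < card {a, s, q}" by (intro psubset_card_mono) auto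
  also have "\<dots> \<le> 3" by (simp add: card_insert_if)
  finally show ?thesis by simp
qed

lemma card_rho_sb_insert_decreased:
  "card {p \<in> insert q P. rho_sb P s \<delta> p > rho_sb (insert q P) s \<delta> p} \<le> 1"
    (is "card ?D \<le> 1")
proof (cases "a = s")
  case True
  then have "?D \<subseteq> {s}"
    using rho_sb_insert_eq_except rho_sb_insert_new_ge by fastforce
  then have "card ?D \<le> card {s}" by (intro card_mono) auto
  then show ?thesis by simp
next
  case False
  then have "?D \<subset> {a, s}"
    using rho_sb_insert_eq_except rho_sb_insert_new_ge rho_sb_insert_source_ge by fastforce
  then have "card ?D < card {a, s}" by (intro psubset_card_mono) auto
  with False show ?thesis by simp
qed

end

theorem lemma10:
  fixes P :: "real set" and s q \<delta> :: real
  assumes "1/2 < \<delta>" and "\<delta> < 1"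
    and "finite P" and "s \<in> P" and "q \<notin> P"
  shows "card {p \<in> P \<union> {q}. rho_sb P s \<delta> p < rho_sb (P \<union> {q}) s \<delta> p} \<le> 2
       \<and> card {p \<in> P \<union> {q}. rho_sb P s \<delta> p > rho_sb (P \<union> {q}) s \<delta> p} \<le> 1"
proof -
  obtain a where kept: "\<And>p. p \<in> P \<Longrightarrow> p \<noteq> a \<Longrightarrow> succs (insert q P) s p = succs P s p"
    using obtain_succs_insert_eq_except[of P q s] by blast
  show ?thesis
    using card_rho_sb_insert_increased[of P s q a \<delta>, OF assms(3-5) kept]
      card_rho_sb_insert_decreased[of P s q a \<delta>, OF assms(3-5) kept]
    by simp
qed

end
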